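(* Let $G$ be a finite group, $m\ge 3$ an integer, $R,L,T$ Cayley subsets of $G$, $S\subseteq G$ with $|R|=|L|=|T|-|S|+1$, and $x\in G\setminus S$. Let $\Theta$ be the graph with vertex set $G\times\{0,\dots,m-1\}$ (writing $g_i$ for $(g,i)$, $G_i=G\times\{i\}$) whose edges are: $\{g_0,(rg)_0\}$ ($g\in G,r\in R$); $\{g_1,(lg)_1\}$ ($g\in G,l\in L$); $\{g_0,(sg)_1\}$ ($g\in G,s\in S$); $\{g_i,(tg)_i\}$ ($i\in\{2,\dots,m-1\}$, $g\in G$, $t\in T$); $\{g_i,g_{i+1}\}$ ($g\in G$, $i\in\{1,\dots,m-2\}$); $\{g_0,(xg)_{m-1}\}$ ($g\in G$). Suppose that (a) $\mathrm{BiCay}(G,R,L,S)$ is a $2$-GRR, and (b) for each $i\in\{2,\dots,m-1\}$, $[\Theta(1_0)]\not\cong[\Theta(1_i)]$ and $[\Theta(1_1)]\not\cong[\Theta(1_i)]$. Then $\Theta$ is an $m$-GRR for $G$.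
   Context: A Cayley subset is $X\subseteq G$ with $X=X^{-1}$ and $1\notin X$. $\mathrm{BiCay}(G,R,L,S)$ is the graph with vertex set $G\times\{0,1\}$ and edges $\{g_0,(rg)_0\}$, $\{g_1,(lg)_1\}$, $\{g_0,(sg)_1\}$ for $g\in G$, $r\in R$, $l\in L$, $s\in S$. For a vertex $v$, $\Theta(v)$ is its neighbourhood and $[\Theta(v)]$ the subgraph of $\Theta$ induced on it. An $m$-GRR for $G$ is a finite regular simple graph with a semiregular automorphism group isomorphic to $G$ having $m$ vertex-orbits (here the maps $y_i\mapsto(yg)_i$) and whose full automorphism group is isomorphic to $G$. *)

theory Defs
  imports "HOL-Algebra.Algebra"
begin

definition cayley_subset :: "('a, 'b) monoid_scheme \<Rightarrow> 'a set \<Rightarrow> bool" where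
  "cayley_subset G Y \<longleftrightarrow> Y \<subseteq> carrier G \<and> (\<forall>y\<in>Y. m_inv G y \<in> Y) \<and> monoid.one G \<notin> Y"

definition simple_graph :: "'v set \<Rightarrow> ('v \<Rightarrow> 'v \<Rightarrow> bool) \<Rightarrow> bool" where
  "simple_graph V adj \<longleftrightarrow> (\<forall>u v. adj u v \<longrightarrow> u \<in> V \<and> v \<in> V)
     \<and> (\<forall>u v. adj u v \<longrightarrow> adj v u) \<and> (\<forall>v. \<not> adj v v)"

definition nbhd :: "'v set \<Rightarrow> ('v \<Rightarrow> 'v \<Rightarrow> bool) \<Rightarrow> 'v \<Rightarrow> 'v set" where
  "nbhd V adj v = {u \<in> V. adj v u}"

definition regular_graph :: "'v set \<Rightarrow> ('v \<Rightarrow> 'v \<Rightarrow> bool) \<Rightarrow> bool" where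
  "regular_graph V adj \<longleftrightarrow> (\<exists>k. \<forall>v\<in>V. card (nbhd V adj v) = k)"

definition graph_auts :: "'v set \<Rightarrow> ('v \<Rightarrow> 'v \<Rightarrow> bool) \<Rightarrow> ('v \<Rightarrow> 'v) set" where
  "graph_auts V adj = {f \<in> Bij V. \<forall>u\<in>V. \<forall>w\<in>V. adj u w \<longleftrightarrow> adj (f u) (f w)}"

definition AutGroup :: "'v set \<Rightarrow> ('v \<Rightarrow> 'v \<Rightarrow> bool) \<Rightarrow> ('v \<Rightarrow> 'v) monoid" where
  "AutGroup V adj = (BijGroup V) \<lparr>carrier := graph_auts V adj\<rparr>"

definition induced_nbhd_iso :: "'v set \<Rightarrow> ('v \<Rightarrow> 'v \<Rightarrow> bool) \<Rightarrow> 'v \<Rightarrow> 'v \<Rightarrow> bool" where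
  "induced_nbhd_iso V adj v w \<longleftrightarrow> (\<exists>f. bij_betw f (nbhd V adj v) (nbhd V adj w) \<and>
     (\<forall>a\<in>nbhd V adj v. \<forall>b\<in>nbhd V adj v. adj a b \<longleftrightarrow> adj (f a) (f b)))"

definition layered_verts :: "('a, 'b) monoid_scheme \<Rightarrow> nat \<Rightarrow> ('a \<times> nat) set" where
  "layered_verts G m = carrier G \<times> {0..<m}"

definition rmult_map :: "('a, 'b) monoid_scheme \<Rightarrow> nat \<Rightarrow> 'a \<Rightarrow> ('a \<times> nat \<Rightarrow> 'a \<times> nat)" where
  "rmult_map G m g = (\<lambda>v \<in> layered_verts G m. (monoid.mult G (fst v) g, snd v))"

definition is_mGRR :: "('a, 'b) monoid_scheme \<Rightarrow> nat \<Rightarrow> ('a \<times> nat \<Rightarrow> 'a \<times> nat \<Rightarrow> bool) \<Rightarrow> bool" where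
  "is_mGRR G m adj \<longleftrightarrow>
     (let V = layered_verts G m; H = rmult_map G m ` carrier G; A = AutGroup V adj in
       finite V \<and> simple_graph V adj \<and> regular_graph V adj
       \<and> H \<subseteq> carrier A \<and> subgroup H A \<and> (A\<lparr>carrier := H\<rparr>) \<cong> G
       \<and> (\<forall>g\<in>carrier G. \<forall>v\<in>V. rmult_map G m g v = v \<longrightarrow> g = monoid.one G)
       \<and> card {(\<lambda>h. h v) ` H | v. v \<in> V} = m
       \<and> A \<cong> G)"

definition adj_of_edges :: "'v set set \<Rightarrow> 'v \<Rightarrow> 'v \<Rightarrow> bool" where
  "adj_of_edges E u v \<longleftrightarrow> {u, v} \<in> E"

definition BiCay_edges :: "('a, 'b) monoid_scheme \<Rightarrow> 'a set \<Rightarrow> 'a set \<Rightarrow> 'a set \<Rightarrow> ('a \<times> nat) set set" where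
  "BiCay_edges G R L S =
     {{(g, 0), (monoid.mult G r g, 0)} | g r. g \<in> carrier G \<and> r \<in> R}
   \<union> {{(g, 1), (monoid.mult G l g, 1)} | g l. g \<in> carrier G \<and> l \<in> L}
   \<union> {{(g, 0), (monoid.mult G s g, 1)} | g s. g \<in> carrier G \<and> s \<in> S}"

definition BiCay :: "('a, 'b) monoid_scheme \<Rightarrow> 'a set \<Rightarrow> 'a set \<Rightarrow> 'a set \<Rightarrow> ('a \<times> nat \<Rightarrow> 'a \<times> nat \<Rightarrow> bool)" where
  "BiCay G R L S = adj_of_edges (BiCay_edges G R L S)"

definition Theta_edges :: "('a, 'b) monoid_scheme \<Rightarrow> nat \<Rightarrow> 'a set \<Rightarrow> 'a set \<Rightarrow> 'a set \<Rightarrow> 'a set \<Rightarrow> 'a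
     \<Rightarrow> ('a \<times> nat) set set" where
  "Theta_edges G m R L S T x =
     BiCay_edges G R L S
   \<union> {{(g, i), (monoid.mult G t g, i)} | g t i. g \<in> carrier G \<and> t \<in> T \<and> 2 \<le> i \<and> i \<le> m - 1}
   \<union> {{(g, i), (g, i + 1)} | g i. g \<in> carrier G \<and> 1 \<le> i \<and> i \<le> m - 2}
   \<union> {{(g, 0), (monoid.mult G x g, m - 1)} | g. g \<in> carrier G}"

definition Theta :: "('a, 'b) monoid_scheme \<Rightarrow> nat \<Rightarrow> 'a set \<Rightarrow> 'a set \<Rightarrow> 'a set \<Rightarrow> 'a set \<Rightarrow> 'a
     \<Rightarrow> ('a \<times> nat \<Rightarrow> 'a \<times> nat \<Rightarrow> bool)" where
  "Theta G m R L S T x = adj_of_edges (Theta_edges G m R L S T x)"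

end

(*
  Right multiplications rho_g : (a, i) |-> (ag, i) are automorphisms of Theta, since each of its
  edge families is a union of sets of "translates" {g_k, (cg)_l}.  Counting the neighbours of the
  vertices 1_i shows that Theta is regular when |R| = |L| = |T| - |S| + 1.

  Conversely, an automorphism mapping a vertex of layer i into layer j yields, after composing with
  suitable rho's, an isomorphism between [Theta(1_i)] and [Theta(1_j)]; so by (b) every automorphism
  preserves G_0 u G_1, on which Theta induces BiCay(G, R, L, S).  That graph is a 2-GRR, hence the
  automorphism agrees with some rho_h on G_0 u G_1.  The remaining layers hang off G_1 along the
  paths g_1 - g_2 - ... - g_(m-1), and for k >= 1 the vertex g_(k+1) is the only neighbour of g_k
  above layer k; induction along these paths shows that the automorphism is rho_h.
*)

theory Submission
  imports Defs
begin

lemma layered_verts_iff [simp]: "(a, i) \<in> layered_verts G m \<longleftrightarrow> a \<in> carrier G \<and> i < m"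
  by (simp add: layered_verts_def)

lemma graph_autsD:
  assumes "f \<in> graph_auts V adj"
  shows graph_aut_bij_betw: "bij_betw f V V"
    and graph_aut_extensional: "f \<in> extensional V"
    and graph_aut_adj_iff: "u \<in> V \<Longrightarrow> w \<in> V \<Longrightarrow> adj (f u) (f w) \<longleftrightarrow> adj u w"
  using assms by (auto simp: graph_auts_def Bij_def)

lemma subgroup_graph_auts: "subgroup (graph_auts V adj) (BijGroup V)"
proof (rule group.subgroupI[OF group_BijGroup])
  show "graph_auts V adj \<subseteq> carrier (BijGroup V)"
    by (auto simp: graph_auts_def BijGroup_def)
  show "graph_auts V adj \<noteq> {}"
  proof -
    have "(\<lambda>v\<in>V. v) \<in> graph_auts V adj" by (simp add: graph_auts_def id_Bij)
    then show ?thesis by blast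
  qed
next
  fix f assume f: "f \<in> graph_auts V adj"
  then have fB: "f \<in> Bij V" by (simp add: graph_auts_def)
  have bij: "bij_betw f V V" using f by (rule graph_aut_bij_betw)
  have "adj u w \<longleftrightarrow> adj (inv_into V f u) (inv_into V f w)" if "u \<in> V" "w \<in> V" for u w
    using graph_aut_adj_iff[OF f, of "inv_into V f u" "inv_into V f w"] that bij
    by (simp add: bij_betw_inv_into_right bij_betw_apply[OF bij_betw_inv_into])
  then show "inv\<^bsub>BijGroup V\<^esub> f \<in> graph_auts V adj"
    by (simp add: inv_BijGroup[OF fB] graph_auts_def restrict_inv_into_Bij[OF fB])
next
  fix f g assume f: "f \<in> graph_auts V adj" and g: "g \<in> graph_auts V adj"
  have "adj u w \<longleftrightarrow> adj (compose V f g u) (compose V f g w)" if "u \<in> V" "w \<in> V" for u w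
    using that graph_aut_adj_iff[OF f] graph_aut_adj_iff[OF g]
      bij_betw_apply[OF graph_aut_bij_betw[OF g]] by (simp add: compose_eq)
  then show "f \<otimes>\<^bsub>BijGroup V\<^esub> g \<in> graph_auts V adj"
    using f g by (auto simp: graph_auts_def BijGroup_def compose_Bij)
qed

lemma group_AutGroup: "group (AutGroup V adj)"
  unfolding AutGroup_def
  by (rule group.subgroup_imp_group[OF group_BijGroup subgroup_graph_auts])

lemma AutGroup_carrier [simp]: "carrier (AutGroup V adj) = graph_auts V adj"
  by (simp add: AutGroup_def)

lemma AutGroup_mult:
  "f \<in> graph_auts V adj \<Longrightarrow> g \<in> graph_auts V adj \<Longrightarrow> f \<otimes>\<^bsub>AutGroup V adj\<^esub> g = compose V f g"
  by (simp add: AutGroup_def BijGroup_def graph_auts_def)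

lemma compose_graph_auts:
  "f \<in> graph_auts V adj \<Longrightarrow> g \<in> graph_auts V adj \<Longrightarrow> compose V f g \<in> graph_auts V adj"
  using monoid.m_closed[OF group.is_monoid[OF group_AutGroup], of f V adj g] by (simp add: AutGroup_mult)

lemma graph_aut_image_nbhd:
  assumes f: "f \<in> graph_auts V adj" and u: "u \<in> V"
  shows "f ` nbhd V adj u = nbhd V adj (f u)"
proof -
  have bij: "bij_betw f V V" using f by (rule graph_aut_bij_betw)
  have "nbhd V adj (f u) = f ` {w \<in> V. adj (f u) (f w)}"
    using bij by (auto simp: nbhd_def bij_betw_def)
  also have "\<dots> = f ` nbhd V adj u"
    using graph_aut_adj_iff[OF f u] by (auto simp: nbhd_def)
  finally show ?thesis by simp
qed

lemma induced_nbhd_iso_graph_aut: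
  assumes f: "f \<in> graph_auts V adj" and u: "u \<in> V"
  shows "induced_nbhd_iso V adj u (f u)"
  unfolding induced_nbhd_iso_def
proof (intro exI conjI ballI)
  have "inj_on f (nbhd V adj u)"
    using graph_aut_bij_betw[OF f] by (auto simp: bij_betw_def nbhd_def intro: inj_on_subset)
  then show "bij_betw f (nbhd V adj u) (nbhd V adj (f u))"
    using graph_aut_image_nbhd[OF f u] by (simp add: bij_betw_def)
  fix a b assume "a \<in> nbhd V adj u" "b \<in> nbhd V adj u"
  then show "adj a b \<longleftrightarrow> adj (f a) (f b)"
    using graph_aut_adj_iff[OF f] by (simp add: nbhd_def)
qed

lemma card_nbhd_graph_aut:
  "f \<in> graph_auts V adj \<Longrightarrow> u \<in> V \<Longrightarrow> card (nbhd V adj (f u)) = card (nbhd V adj u)"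
  using bij_betw_same_card induced_nbhd_iso_graph_aut unfolding induced_nbhd_iso_def by metis

lemma restrict_graph_aut:
  assumes f: "f \<in> graph_auts V adj" and "W \<subseteq> V" "finite W" "f ` W \<subseteq> W"
    and agree: "\<And>u w. u \<in> W \<Longrightarrow> w \<in> W \<Longrightarrow> adj' u w \<longleftrightarrow> adj u w"
  shows "restrict f W \<in> graph_auts W adj'"
proof -
  have "inj_on f W"
    using graph_aut_bij_betw[OF f] \<open>W \<subseteq> V\<close> by (auto simp: bij_betw_def intro: inj_on_subset)
  then have "bij_betw f W W"
    using \<open>finite W\<close> \<open>f ` W \<subseteq> W\<close> by (simp add: bij_betw_def card_subset_eq card_image)
  then have "restrict f W \<in> Bij W"
    by (simp add: Bij_def bij_betw_def inj_on_def)
  moreover have "adj' u w \<longleftrightarrow> adj' (f u) (f w)" if "u \<in> W" "w \<in> W" for u w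
  proof -
    have "f u \<in> W" "f w \<in> W" using that \<open>f ` W \<subseteq> W\<close> by auto
    then show ?thesis
      using that agree graph_aut_adj_iff[OF f] \<open>W \<subseteq> V\<close> by (simp add: subset_iff)
  qed
  ultimately show ?thesis by (simp add: graph_auts_def)
qed

context group
begin

lemma rmult_map_apply [simp]:
  "a \<in> carrier G \<Longrightarrow> i < m \<Longrightarrow> rmult_map G m g (a, i) = (a \<otimes> g, i)"
  by (simp add: rmult_map_def)

lemma rmult_map_Bij:
  assumes g: "g \<in> carrier G"
  shows "rmult_map G m g \<in> Bij (layered_verts G m)"
proof -
  have "bij_betw (rmult_map G m g) (layered_verts G m) (layered_verts G m)"
  proof (rule bij_betwI')
    fix u v assume "u \<in> layered_verts G m" "v \<in> layered_verts G m"
    then show "rmult_map G m g u = rmult_map G m g v \<longleftrightarrow> u = v"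
      using g by (cases u, cases v) auto
  next
    fix u assume "u \<in> layered_verts G m"
    then show "rmult_map G m g u \<in> layered_verts G m" using g by (cases u) auto
  next
    fix v assume "v \<in> layered_verts G m"
    then obtain b j where v: "v = (b, j)" "b \<in> carrier G" "j < m" by (cases v) auto
    then have "v = rmult_map G m g (b \<otimes> inv g, j)" using g by (simp add: m_assoc)
    moreover have "(b \<otimes> inv g, j) \<in> layered_verts G m" using v g by simp
    ultimately show "\<exists>u \<in> layered_verts G m. v = rmult_map G m g u" by blast
  qed
  then show ?thesis by (simp add: Bij_def rmult_map_def)
qed

lemma rmult_map_in_graph_auts:
  assumes g: "g \<in> carrier G"
    and invariant: "\<And>a b i j. a \<in> carrier G \<Longrightarrow> b \<in> carrier G \<Longrightarrow> i < m \<Longrightarrow> j < m \<Longrightarrow>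
      adj (a \<otimes> g, i) (b \<otimes> g, j) \<longleftrightarrow> adj (a, i) (b, j)"
  shows "rmult_map G m g \<in> graph_auts (layered_verts G m) adj"
proof -
  have "adj u w \<longleftrightarrow> adj (rmult_map G m g u) (rmult_map G m g w)"
    if "u \<in> layered_verts G m" "w \<in> layered_verts G m" for u w
    using that invariant by (cases u, cases w) auto
  then show ?thesis using rmult_map_Bij[OF g] by (simp add: graph_auts_def)
qed

lemma compose_rmult_map:
  assumes "g \<in> carrier G" "h \<in> carrier G"
  shows "compose (layered_verts G m) (rmult_map G m g) (rmult_map G m h) = rmult_map G m (h \<otimes> g)"
proof
  fix v show "compose (layered_verts G m) (rmult_map G m g) (rmult_map G m h) v = rmult_map G m (h \<otimes> g) v"
    using assms by (cases v) (auto simp: compose_def rmult_map_def m_assoc)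
qed

lemma rmult_map_fixed_point_free:
  "g \<in> carrier G \<Longrightarrow> v \<in> layered_verts G m \<Longrightarrow> rmult_map G m g v = v \<Longrightarrow> g = \<one>"
  by (cases v) (auto simp: r_cancel_one')

lemma inj_on_rmult_map:
  assumes "0 < m"
  shows "inj_on (rmult_map G m) (carrier G)"
proof (rule inj_onI)
  fix g h assume "g \<in> carrier G" "h \<in> carrier G" "rmult_map G m g = rmult_map G m h"
  then have "rmult_map G m g (\<one>, 0) = rmult_map G m h (\<one>, 0)" by simp
  then show "g = h" using \<open>g \<in> carrier G\<close> \<open>h \<in> carrier G\<close> assms by simp
qed

lemma card_rmult_map_orbits:
  "card {(\<lambda>f. f v) ` rmult_map G m ` carrier G | v. v \<in> layered_verts G m} = m"
proof -
  have orbit: "(\<lambda>f. f (a, i)) ` rmult_map G m ` carrier G = carrier G \<times> {i}"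
    if "a \<in> carrier G" "i < m" for a i
  proof -
    have "b = a \<otimes> (inv a \<otimes> b)" if "b \<in> carrier G" for b
      using \<open>a \<in> carrier G\<close> that by (simp add: m_assoc[symmetric])
    then show ?thesis using that by (auto simp: image_image)
  qed
  have "{(\<lambda>f. f v) ` rmult_map G m ` carrier G | v. v \<in> layered_verts G m}
      = (\<lambda>i. carrier G \<times> {i}) ` {..<m}"
    using orbit by (auto simp: layered_verts_def) (metis one_closed orbit)
  moreover have "inj_on (\<lambda>i. carrier G \<times> {i}) {..<m}"
    by (auto simp: inj_on_def)
  ultimately show ?thesis by (simp add: card_image)
qed

lemma regular_graph_if_rmult_map_graph_auts:
  assumes auts: "\<And>g. g \<in> carrier G \<Longrightarrow> rmult_map G m g \<in> graph_auts (layered_verts G m) adj"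
    and degree: "\<And>i. i < m \<Longrightarrow> card (nbhd (layered_verts G m) adj (\<one>, i)) = k"
  shows "regular_graph (layered_verts G m) adj"
  unfolding regular_graph_def
proof (intro exI ballI)
  fix v assume "v \<in> layered_verts G m"
  then obtain g i where v: "v = (g, i)" "g \<in> carrier G" "i < m" by (cases v) auto
  have "card (nbhd (layered_verts G m) adj (rmult_map G m g (\<one>, i))) = k"
    using card_nbhd_graph_aut[OF auts[OF v(2)], of "(\<one>, i)"] degree[OF v(3)] v by simp
  then show "card (nbhd (layered_verts G m) adj v) = k" using v by simp
qed

lemma AutGroup_iso_if_graph_auts_eq:
  assumes "0 < m" and auts: "graph_auts (layered_verts G m) adj = rmult_map G m ` carrier G"
  shows "AutGroup (layered_verts G m) adj \<cong> G"
proof -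
  let ?A = "AutGroup (layered_verts G m) adj"
  \<comment> \<open>g \<mapsto> rho_g is an anti-homomorphism, hence the inverse\<close>
  let ?f = "\<lambda>g. rmult_map G m (inv g)"
  have "?f \<in> hom G ?A"
  proof (rule homI)
    fix g h assume "g \<in> carrier G" "h \<in> carrier G"
    then show "?f (g \<otimes> h) = ?f g \<otimes>\<^bsub>?A\<^esub> ?f h"
      by (simp add: auts AutGroup_mult compose_rmult_map inv_mult_group)
  qed (simp add: auts)
  moreover have "bij_betw ?f (carrier G) (carrier ?A)"
  proof (rule bij_betw_imageI)
    show "inj_on ?f (carrier G)"
    proof (rule inj_onI)
      fix g h assume g: "g \<in> carrier G" and h: "h \<in> carrier G" and eq: "?f g = ?f h"
      then have "inv g = inv h" using inj_onD[OF inj_on_rmult_map[OF \<open>0 < m\<close>] eq] by simp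
      then show "g = h" using g h inv_inj by (simp add: inj_on_eq_iff)
    qed
    have "rmult_map G m g \<in> ?f ` carrier G" if "g \<in> carrier G" for g
      using that image_eqI[of _ ?f "inv g"] by simp
    then show "?f ` carrier G = carrier ?A" by (auto simp: auts)
  qed
  ultimately show ?thesis by (metis iso_sym is_isoI isoI)
qed

lemma is_mGRR_if_graph_auts_eq:
  assumes "finite (carrier G)" "0 < m"
    and "simple_graph (layered_verts G m) adj" "regular_graph (layered_verts G m) adj"
    and auts: "graph_auts (layered_verts G m) adj = rmult_map G m ` carrier G"
  shows "is_mGRR G m adj"
proof -
  let ?A = "AutGroup (layered_verts G m) adj"
  have iso: "?A \<cong> G" by (rule AutGroup_iso_if_graph_auts_eq[OF \<open>0 < m\<close> auts])
  moreover have "?A\<lparr>carrier := rmult_map G m ` carrier G\<rparr> \<cong> G"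
    using iso by (simp add: AutGroup_def auts)
  moreover have "subgroup (rmult_map G m ` carrier G) ?A"
    using group.subgroup_self[OF group_AutGroup[of "layered_verts G m" adj]] by (simp add: auts)
  moreover have "finite (layered_verts G m)"
    using \<open>finite (carrier G)\<close> by (simp add: layered_verts_def)
  ultimately show ?thesis
    using assms card_rmult_map_orbits
    by (auto simp: is_mGRR_def Let_def intro: rmult_map_fixed_point_free)
qed

lemma graph_auts_eq_if_is_mGRR:
  assumes "finite (carrier G)" and grr: "is_mGRR G m adj"
  shows "graph_auts (layered_verts G m) adj = rmult_map G m ` carrier G"
proof -
  let ?A = "AutGroup (layered_verts G m) adj" and ?H = "rmult_map G m ` carrier G"
  have sub: "?H \<subseteq> carrier ?A" and isoH: "?A\<lparr>carrier := ?H\<rparr> \<cong> G" and iso: "?A \<cong> G"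
    using grr by (auto simp: is_mGRR_def Let_def)
  have "finite (carrier ?A)" using iso_finite[OF iso] assms(1) by simp
  moreover have "card ?H = card (carrier ?A)"
    using iso_same_card[OF isoH] iso_same_card[OF iso] by simp
  ultimately have "?H = carrier ?A" using sub by (simp add: card_subset_eq)
  then show ?thesis by simp
qed

lemma induced_nbhd_iso_layers_if_graph_aut:
  assumes auts: "\<And>g. g \<in> carrier G \<Longrightarrow> rmult_map G m g \<in> graph_auts (layered_verts G m) adj"
    and f: "f \<in> graph_auts (layered_verts G m) adj"
    and "a \<in> carrier G" "i < m" "f (a, i) = (b, j)"
  shows "induced_nbhd_iso (layered_verts G m) adj (\<one>, i) (\<one>, j)"
proof -
  let ?V = "layered_verts G m"
  have "(b, j) \<in> ?V" using graph_aut_bij_betw[OF f] assms(3-5) by (metis bij_betw_apply layered_verts_iff)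
  then have b: "b \<in> carrier G" "j < m" by simp_all
  let ?\<psi> = "compose ?V (rmult_map G m (inv b)) (compose ?V f (rmult_map G m a))"
  have "?\<psi> \<in> graph_auts ?V adj"
    using assms(3) b by (intro compose_graph_auts auts f) simp_all
  moreover have "?\<psi> (\<one>, i) = (\<one>, j)"
    using assms(3-5) b \<open>(b, j) \<in> ?V\<close> by (simp add: compose_eq)
  ultimately show ?thesis
    using induced_nbhd_iso_graph_aut[of ?\<psi> ?V adj "(\<one>, i)"] \<open>i < m\<close> by simp
qed

end

definition translate_edges :: "('a, 'b) monoid_scheme \<Rightarrow> 'a set \<Rightarrow> nat \<Rightarrow> nat \<Rightarrow> ('a \<times> nat) set set" where
  "translate_edges G C k l = {{(g, k), (c \<otimes>\<^bsub>G\<^esub> g, l)} | g c. g \<in> carrier G \<and> c \<in> C}"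

lemma adj_of_edges_Un: "adj_of_edges (E \<union> F) u v \<longleftrightarrow> adj_of_edges E u v \<or> adj_of_edges F u v"
  by (simp add: adj_of_edges_def)

lemma adj_of_edges_UN: "adj_of_edges (\<Union>k\<in>K. E k) u v \<longleftrightarrow> (\<exists>k\<in>K. adj_of_edges (E k) u v)"
  by (simp add: adj_of_edges_def)

lemma (in group) adj_of_translate_edges:
  assumes "C \<subseteq> carrier G"
  shows "adj_of_edges (translate_edges G C k l) (a, i) (b, j) \<longleftrightarrow> a \<in> carrier G \<and> b \<in> carrier G \<and>
    ((i, j) = (k, l) \<and> b \<otimes> inv a \<in> C \<or> (i, j) = (l, k) \<and> a \<otimes> inv b \<in> C)"
proof
  assume "adj_of_edges (translate_edges G C k l) (a, i) (b, j)"
  then obtain g c where "{(a, i), (b, j)} = {(g, k), (c \<otimes> g, l)}" "g \<in> carrier G" "c \<in> C"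
    by (auto simp: adj_of_edges_def translate_edges_def)
  then show "a \<in> carrier G \<and> b \<in> carrier G \<and>
      ((i, j) = (k, l) \<and> b \<otimes> inv a \<in> C \<or> (i, j) = (l, k) \<and> a \<otimes> inv b \<in> C)"
    using assms by (auto simp: doubleton_eq_iff m_assoc)
next
  assume "a \<in> carrier G \<and> b \<in> carrier G \<and>
      ((i, j) = (k, l) \<and> b \<otimes> inv a \<in> C \<or> (i, j) = (l, k) \<and> a \<otimes> inv b \<in> C)"
  then consider "{(a, i), (b, j)} = {(a, k), ((b \<otimes> inv a) \<otimes> a, l)}" "a \<in> carrier G" "b \<otimes> inv a \<in> C"
    | "{(a, i), (b, j)} = {(b, k), ((a \<otimes> inv b) \<otimes> b, l)}" "b \<in> carrier G" "a \<otimes> inv b \<in> C"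
    by (auto simp: m_assoc insert_commute)
  then show "adj_of_edges (translate_edges G C k l) (a, i) (b, j)"
    unfolding adj_of_edges_def translate_edges_def by cases blast+
qed

lemma UN_translate_edges:
  "{{(g, i), (c \<otimes>\<^bsub>G\<^esub> g, i)} | g c i. g \<in> carrier G \<and> c \<in> C \<and> i \<in> K} = (\<Union>k\<in>K. translate_edges G C k k)"
  unfolding translate_edges_def by blast

lemma (in monoid) UN_translate_edges_one:
  "{{(g, i), (g, Suc i)} | g i. g \<in> carrier G \<and> i \<in> K} = (\<Union>k\<in>K. translate_edges G {\<one>} k (Suc k))"
  unfolding translate_edges_def by (fastforce simp: l_one)

lemma (in group) cayley_subset_mult_inv_iff:
  assumes "cayley_subset G C" "a \<in> carrier G" "b \<in> carrier G"
  shows "a \<otimes> inv b \<in> C \<longleftrightarrow> b \<otimes> inv a \<in> C"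
proof -
  have "inv (a \<otimes> inv b) = b \<otimes> inv a" "inv (b \<otimes> inv a) = a \<otimes> inv b"
    using assms(2,3) by (simp_all add: inv_mult_group)
  then show ?thesis using assms(1) unfolding cayley_subset_def by metis
qed

lemma (in group) rmult_mult_inv [simp]:
  "a \<in> carrier G \<Longrightarrow> b \<in> carrier G \<Longrightarrow> g \<in> carrier G \<Longrightarrow> (b \<otimes> g) \<otimes> inv (a \<otimes> g) = b \<otimes> inv a"
  by (simp add: inv_mult_group m_assoc[symmetric]) (simp add: m_assoc)

lemma (in group) adj_of_translate_edges_diag:
  assumes "cayley_subset G C"
  shows "adj_of_edges (translate_edges G C k k) (a, i) (b, j) \<longleftrightarrow>
    a \<in> carrier G \<and> b \<in> carrier G \<and> i = k \<and> j = k \<and> b \<otimes> inv a \<in> C"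
  using assms cayley_subset_mult_inv_iff[OF assms]
  by (auto simp: adj_of_translate_edges cayley_subset_def)

lemma (in group) adj_of_translate_edges_one:
  "adj_of_edges (translate_edges G {\<one>} k l) (a, i) (b, j) \<longleftrightarrow>
    a \<in> carrier G \<and> b = a \<and> ((i, j) = (k, l) \<or> (i, j) = (l, k))"
  by (auto simp: adj_of_translate_edges inv_solve_right')

lemma (in group) adj_of_translate_edges_rmult:
  assumes "C \<subseteq> carrier G" "a \<in> carrier G" "b \<in> carrier G" "g \<in> carrier G"
  shows "adj_of_edges (translate_edges G C k l) (a \<otimes> g, i) (b \<otimes> g, j) \<longleftrightarrow>
    adj_of_edges (translate_edges G C k l) (a, i) (b, j)"
  using assms by (simp add: adj_of_translate_edges)

locale theta_graph = group +
  fixes m :: nat and R L S T :: "'a set" and x :: 'a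
  assumes finite_carrier: "finite (carrier G)" and m_ge_3: "3 \<le> m"
    and cayley_R: "cayley_subset G R" and cayley_L: "cayley_subset G L"
    and cayley_T: "cayley_subset G T" and S_subset: "S \<subseteq> carrier G"
    and x_in_carrier: "x \<in> carrier G"
begin

abbreviation V :: "('a \<times> nat) set" where "V \<equiv> layered_verts G m"
abbreviation \<Theta> :: "'a \<times> nat \<Rightarrow> 'a \<times> nat \<Rightarrow> bool" where "\<Theta> \<equiv> Theta G m R L S T x"

abbreviation low_layers_distinguished :: bool where
  "low_layers_distinguished \<equiv> \<forall>i\<in>{2..m-1}.
     \<not> induced_nbhd_iso V \<Theta> (\<one>, 0) (\<one>, i) \<and> \<not> induced_nbhd_iso V \<Theta> (\<one>, 1) (\<one>, i)"

lemma R_subset: "R \<subseteq> carrier G" and L_subset: "L \<subseteq> carrier G" and T_subset: "T \<subseteq> carrier G"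
  using cayley_R cayley_L cayley_T by (simp_all add: cayley_subset_def)

lemma BiCay_edges_eq:
  "BiCay_edges G R L S = translate_edges G R 0 0 \<union> translate_edges G L 1 1 \<union> translate_edges G S 0 1"
  by (simp add: BiCay_edges_def translate_edges_def)

lemma Theta_edges_eq:
  "Theta_edges G m R L S T x = BiCay_edges G R L S
     \<union> (\<Union>k\<in>{2..m-1}. translate_edges G T k k)
     \<union> (\<Union>k\<in>{1..m-2}. translate_edges G {\<one>} k (Suc k))
     \<union> translate_edges G {x} 0 (m - 1)"
proof -
  have "{{(g, i), (t \<otimes> g, i)} | g t i. g \<in> carrier G \<and> t \<in> T \<and> 2 \<le> i \<and> i \<le> m - 1}
      = (\<Union>k\<in>{2..m-1}. translate_edges G T k k)"
    using UN_translate_edges[of G T "{2..m-1}"] by simp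
  moreover have "{{(g, i), (g, i + 1)} | g i. g \<in> carrier G \<and> 1 \<le> i \<and> i \<le> m - 2}
      = (\<Union>k\<in>{1..m-2}. translate_edges G {\<one>} k (Suc k))"
    using UN_translate_edges_one[of "{1..m-2}"] by simp
  moreover have "{{(g, 0), (x \<otimes> g, m - 1)} | g. g \<in> carrier G} = translate_edges G {x} 0 (m - 1)"
    by (auto simp: translate_edges_def)
  ultimately show ?thesis
    by (simp add: Theta_edges_def)
qed

lemma Theta_adj_iff:
  "\<Theta> (a, i) (b, j) \<longleftrightarrow> a \<in> carrier G \<and> b \<in> carrier G \<and>
     (i = 0 \<and> j = 0 \<and> b \<otimes> inv a \<in> R \<or>
      i = 1 \<and> j = 1 \<and> b \<otimes> inv a \<in> L \<or>
      i = 0 \<and> j = 1 \<and> b \<otimes> inv a \<in> S \<or> i = 1 \<and> j = 0 \<and> a \<otimes> inv b \<in> S \<or>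
      2 \<le> i \<and> i < m \<and> j = i \<and> b \<otimes> inv a \<in> T \<or>
      a = b \<and> (1 \<le> i \<and> j = Suc i \<or> 1 \<le> j \<and> i = Suc j) \<and> i < m \<and> j < m \<or>
      i = 0 \<and> j = m - 1 \<and> b \<otimes> inv a = x \<or> i = m - 1 \<and> j = 0 \<and> a \<otimes> inv b = x)"
proof -
  have layers_T: "(\<exists>k\<in>{2..m-1}. adj_of_edges (translate_edges G T k k) (a, i) (b, j)) \<longleftrightarrow>
      a \<in> carrier G \<and> b \<in> carrier G \<and> 2 \<le> i \<and> i < m \<and> j = i \<and> b \<otimes> inv a \<in> T"
    by (auto simp: adj_of_translate_edges_diag[OF cayley_T])
  have path: "(\<exists>k\<in>{1..m-2}. adj_of_edges (translate_edges G {\<one>} k (Suc k)) (a, i) (b, j)) \<longleftrightarrow>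
      a \<in> carrier G \<and> a = b \<and> (1 \<le> i \<and> j = Suc i \<or> 1 \<le> j \<and> i = Suc j) \<and> i < m \<and> j < m"
    by (auto simp: adj_of_translate_edges_one)
  show ?thesis
    unfolding Theta_def Theta_edges_eq BiCay_edges_eq adj_of_edges_Un adj_of_edges_UN layers_T path
    using S_subset x_in_carrier
    by (auto simp: adj_of_translate_edges_diag[OF cayley_R] adj_of_translate_edges_diag[OF cayley_L]
        adj_of_translate_edges)
qed

lemma one_notin: "\<one> \<notin> R" "\<one> \<notin> L" "\<one> \<notin> T"
  using cayley_R cayley_L cayley_T by (simp_all add: cayley_subset_def)

lemma simple_graph_Theta: "simple_graph V \<Theta>"
  unfolding simple_graph_def
proof (intro conjI allI impI)
  fix u v assume "\<Theta> u v"
  then show "u \<in> V" "v \<in> V" using m_ge_3 by (cases u, cases v, auto simp: Theta_adj_iff)+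
  show "\<Theta> v u" using \<open>\<Theta> u v\<close> by (simp add: Theta_def adj_of_edges_def insert_commute)
next
  fix v show "\<not> \<Theta> v v"
    using one_notin m_ge_3 by (cases v) (auto simp: Theta_adj_iff)
qed

lemma rmult_map_in_graph_auts_Theta:
  assumes "g \<in> carrier G"
  shows "rmult_map G m g \<in> graph_auts V \<Theta>"
  by (rule rmult_map_in_graph_auts[OF assms])
    (simp add: Theta_def Theta_edges_eq BiCay_edges_eq adj_of_edges_Un adj_of_edges_UN
      adj_of_translate_edges_rmult R_subset L_subset S_subset T_subset x_in_carrier assms)

lemma nbhd_Theta_0: "nbhd V \<Theta> (\<one>, 0) = R \<times> {0} \<union> S \<times> {1} \<union> {(x, m - 1)}"
  using R_subset S_subset x_in_carrier m_ge_3 by (auto simp: nbhd_def Theta_adj_iff)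

lemma nbhd_Theta_1: "nbhd V \<Theta> (\<one>, 1) = L \<times> {1} \<union> m_inv G ` S \<times> {0} \<union> {(\<one>, 2)}"
proof -
  have inv_S: "b \<in> m_inv G ` S \<longleftrightarrow> b \<in> carrier G \<and> inv b \<in> S" for b
    using S_subset by (auto simp: image_iff) (metis inv_inv)
  show ?thesis
    using L_subset S_subset m_ge_3 by (auto simp: nbhd_def Theta_adj_iff inv_S subsetD)
qed

lemma nbhd_Theta_middle:
  "2 \<le> i \<Longrightarrow> Suc i < m \<Longrightarrow> nbhd V \<Theta> (\<one>, i) = T \<times> {i} \<union> {(\<one>, i - 1), (\<one>, Suc i)}"
  using T_subset by (auto simp: nbhd_def Theta_adj_iff)

lemma nbhd_Theta_last: "nbhd V \<Theta> (\<one>, m - 1) = T \<times> {m - 1} \<union> {(\<one>, m - 2), (inv x, 0)}"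
proof -
  have inv_eq_x: "inv b = x \<longleftrightarrow> b = inv x" if "b \<in> carrier G" for b
    using that x_in_carrier by auto
  have "m - 1 = Suc (m - 2)" "m - 1 \<noteq> 0" "m - 1 \<noteq> 1" "m - 2 \<noteq> 0" using m_ge_3 by auto
  then show ?thesis
    using T_subset x_in_carrier by (auto simp: nbhd_def Theta_adj_iff inv_eq_x subsetD)
qed

lemma card_nbhd_Theta:
  assumes "card R = card L" "card L + card S = card T + 1" "i < m"
  shows "card (nbhd V \<Theta> (\<one>, i)) = card R + card S + 1"
proof -
  have fin: "finite R" "finite L" "finite S" "finite T"
    using R_subset L_subset S_subset T_subset finite_carrier by (auto intro: finite_subset)
  have card_inv_S: "card (m_inv G ` S) = card S"
    using inj_on_subset[OF inv_inj S_subset] by (rule card_image)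
  consider "i = 0" | "i = 1" | "2 \<le> i" "Suc i < m" | "i = m - 1"
    using assms(3) by linarith
  then show ?thesis
  proof cases
    case 1
    have "(x, m - 1) \<notin> R \<times> {0} \<union> S \<times> {1}" using m_ge_3 by auto
    moreover have "card (R \<times> {0::nat} \<union> S \<times> {1}) = card R + card S"
      using fin by (subst card_Un_disjoint) (auto simp: card_cartesian_product)
    ultimately show ?thesis using 1 fin by (simp add: nbhd_Theta_0)
  next
    case 2
    have "(\<one>, 2::nat) \<notin> L \<times> {1} \<union> m_inv G ` S \<times> {0}" by auto
    moreover have "card (L \<times> {1::nat} \<union> m_inv G ` S \<times> {0}) = card L + card S"
      using fin card_inv_S by (subst card_Un_disjoint) (auto simp: card_cartesian_product)
    ultimately show ?thesis using fin assms(1) unfolding \<open>i = 1\<close> nbhd_Theta_1 by simp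
  next
    case 3
    then show ?thesis
      using fin assms(1,2) one_notin unfolding nbhd_Theta_middle[OF 3] by (simp add: card_cartesian_product)
  next
    case 4
    then show ?thesis
      using fin assms(1,2) one_notin m_ge_3 unfolding \<open>i = m - 1\<close> nbhd_Theta_last
      by (simp add: card_cartesian_product)
  qed
qed

lemma regular_graph_Theta:
  assumes "card R = card L" "card L + card S = card T + 1"
  shows "regular_graph V \<Theta>"
  using regular_graph_if_rmult_map_graph_auts[OF rmult_map_in_graph_auts_Theta card_nbhd_Theta[OF assms]] .

lemma Theta_eq_BiCay:
  assumes "i < 2" "j < 2"
  shows "\<Theta> (a, i) (b, j) \<longleftrightarrow> BiCay G R L S (a, i) (b, j)"
  unfolding Theta_def BiCay_def Theta_edges_eq adj_of_edges_Un adj_of_edges_UN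
  using assms m_ge_3 x_in_carrier
  by (auto simp: adj_of_translate_edges_diag[OF cayley_T] adj_of_translate_edges_one adj_of_translate_edges)

lemma Theta_upward_neighbour: "\<Theta> (a, k) (b, j) \<Longrightarrow> 1 \<le> k \<Longrightarrow> k < j \<Longrightarrow> b = a \<and> j = Suc k"
  by (auto simp: Theta_adj_iff)

lemma Theta_path_edge: "a \<in> carrier G \<Longrightarrow> 1 \<le> k \<Longrightarrow> Suc k < m \<Longrightarrow> \<Theta> (a, k) (a, Suc k)"
  by (simp add: Theta_adj_iff)

lemma graph_aut_Theta_low_layers:
  assumes ni: low_layers_distinguished
    and f: "f \<in> graph_auts V \<Theta>" and "a \<in> carrier G" "i < 2"
  shows "snd (f (a, i)) < 2"
proof (rule ccontr)
  obtain b j where fa: "f (a, i) = (b, j)" by (cases "f (a, i)")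
  have "f (a, i) \<in> V" using graph_aut_bij_betw[OF f] assms(3,4) m_ge_3 by (simp add: bij_betw_apply)
  moreover assume "\<not> snd (f (a, i)) < 2"
  ultimately have "j \<in> {2..m-1}" using fa by auto
  moreover have "induced_nbhd_iso V \<Theta> (\<one>, i) (\<one>, j)"
    using induced_nbhd_iso_layers_if_graph_aut[OF rmult_map_in_graph_auts_Theta f assms(3) _ fa]
      assms(4) m_ge_3 by simp
  ultimately show False using ni \<open>i < 2\<close> by (auto simp: less_2_cases_iff)
qed

lemma graph_aut_Theta_next_layer:
  assumes f: "f \<in> graph_auts V \<Theta>" and h: "h \<in> carrier G"
    and a: "a \<in> carrier G" and k: "1 \<le> k" "Suc k < m"
    and below: "\<And>b j. b \<in> carrier G \<Longrightarrow> j \<le> k \<Longrightarrow> f (b, j) = (b \<otimes> h, j)"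
  shows "f (a, Suc k) = (a \<otimes> h, Suc k)"
proof -
  obtain b j where fa: "f (a, Suc k) = (b, j)" by (cases "f (a, Suc k)")
  have "f (a, Suc k) \<in> V" using bij_betw_apply[OF graph_aut_bij_betw[OF f]] a k by simp
  then have "(b, j) \<in> V" by (simp only: fa)
  have "\<Theta> (f (a, k)) (f (a, Suc k))"
    using graph_aut_adj_iff[OF f, of "(a, k)" "(a, Suc k)"] Theta_path_edge[OF a k] a k by simp
  then have edge: "\<Theta> (a \<otimes> h, k) (b, j)" using below[OF a] fa by simp
  show ?thesis
  proof (cases "k < j")
    case True
    then show ?thesis using Theta_upward_neighbour[OF edge k(1)] fa by simp
  next
    case False
    have "b \<otimes> inv h \<in> carrier G" using \<open>(b, j) \<in> V\<close> h by simp
    then have "f (b \<otimes> inv h, j) = ((b \<otimes> inv h) \<otimes> h, j)" using below False by simp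
    also have "\<dots> = f (a, Suc k)" using fa h \<open>(b, j) \<in> V\<close> by (simp add: m_assoc)
    finally have "f (b \<otimes> inv h, j) = f (a, Suc k)" .
    then have "(b \<otimes> inv h, j) = (a, Suc k)"
      by (rule inj_onD[OF bij_betw_imp_inj_on[OF graph_aut_bij_betw[OF f]]])
        (use \<open>(b, j) \<in> V\<close> \<open>b \<otimes> inv h \<in> carrier G\<close> a k in simp_all)
    then show ?thesis using False by simp
  qed
qed

lemma graph_aut_Theta_eq_rmult_map:
  assumes f: "f \<in> graph_auts V \<Theta>" and h: "h \<in> carrier G"
    and low: "\<And>a i. a \<in> carrier G \<Longrightarrow> i < 2 \<Longrightarrow> f (a, i) = (a \<otimes> h, i)"
  shows "f = rmult_map G m h"
proof
  have on_V: "f (a, k) = (a \<otimes> h, k)" if "a \<in> carrier G" "k < m" for a k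
    using that
  proof (induction k arbitrary: a rule: less_induct)
    case (less k)
    show ?case
    proof (cases "k < 2")
      case True
      then show ?thesis using low less.prems by simp
    next
      case False
      then obtain k' where k: "k = Suc k'" "1 \<le> k'" by (cases k) auto
      show ?thesis
        unfolding k(1)
        by (rule graph_aut_Theta_next_layer[OF f h less.prems(1) k(2)]) (use less k in auto)
    qed
  qed
  fix v
  show "f v = rmult_map G m h v"
  proof (cases "v \<in> V")
    case True
    then obtain a k where "v = (a, k)" "a \<in> carrier G" "k < m" by (cases v) simp
    then show ?thesis by (simp add: on_V)
  next
    case False
    then have "f v = undefined" using extensional_arb[OF graph_aut_extensional[OF f]] by blast
    then show ?thesis using False by (simp add: rmult_map_def)
  qed
qed

lemma graph_aut_Theta_low_layers_rmult:
  assumes bicay: "is_mGRR G 2 (BiCay G R L S)"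
    and ni: low_layers_distinguished
    and f: "f \<in> graph_auts V \<Theta>"
  obtains h where "h \<in> carrier G" "\<And>a i. a \<in> carrier G \<Longrightarrow> i < 2 \<Longrightarrow> f (a, i) = (a \<otimes> h, i)"
proof -
  let ?W = "layered_verts G 2"
  have W: "?W \<subseteq> V" using m_ge_3 by (auto simp: layered_verts_def)
  have "finite ?W" using finite_carrier by (simp add: layered_verts_def)
  have "restrict f ?W \<in> graph_auts ?W (BiCay G R L S)"
  proof (rule restrict_graph_aut[OF f W \<open>finite ?W\<close>])
    show "f ` ?W \<subseteq> ?W"
    proof
      fix w assume "w \<in> f ` ?W"
      then obtain v where v: "v \<in> ?W" "w = f v" by blast
      have "f v \<in> V" using v W graph_aut_bij_betw[OF f] by (auto intro: bij_betw_apply)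
      moreover have "snd (f v) < 2" using v graph_aut_Theta_low_layers[OF ni f] by (cases v) simp
      ultimately show "w \<in> ?W" using v by (cases "f v") simp
    qed
    fix u w assume "u \<in> ?W" "w \<in> ?W"
    then show "BiCay G R L S u w \<longleftrightarrow> \<Theta> u w" using Theta_eq_BiCay by (cases u, cases w) simp
  qed
  then obtain h where h: "h \<in> carrier G" "restrict f ?W = rmult_map G 2 h"
    using graph_auts_eq_if_is_mGRR[OF finite_carrier bicay] by auto
  have "f (a, i) = (a \<otimes> h, i)" if "a \<in> carrier G" "i < 2" for a i
    using fun_cong[OF h(2), of "(a, i)"] that by simp
  with h(1) show ?thesis by (rule that)
qed

lemma graph_auts_Theta:
  assumes bicay: "is_mGRR G 2 (BiCay G R L S)"
    and ni: low_layers_distinguished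
  shows "graph_auts V \<Theta> = rmult_map G m ` carrier G"
proof (intro equalityI subsetI)
  fix f assume f: "f \<in> graph_auts V \<Theta>"
  obtain h where h: "h \<in> carrier G"
    and low: "\<And>a i. a \<in> carrier G \<Longrightarrow> i < 2 \<Longrightarrow> f (a, i) = (a \<otimes> h, i)"
    using graph_aut_Theta_low_layers_rmult[OF bicay ni f] by blast
  have "f = rmult_map G m h" using graph_aut_Theta_eq_rmult_map[OF f h low] .
  then show "f \<in> rmult_map G m ` carrier G" using h by blast
next
  fix f assume "f \<in> rmult_map G m ` carrier G"
  then show "f \<in> graph_auts V \<Theta>" using rmult_map_in_graph_auts_Theta by blast
qed

end

theorem lemma4p2:
  fixes G :: "('a, 'b) monoid_scheme" and m :: nat and R L S T :: "'a set" and x :: 'a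
  assumes "group G" and "finite (carrier G)" and "m \<ge> 3"
    and "cayley_subset G R" and "cayley_subset G L" and "cayley_subset G T"
    and "S \<subseteq> carrier G"
    and "int (card R) = int (card L)" and "int (card L) = int (card T) - int (card S) + 1"
    and "x \<in> carrier G - S"
    and "is_mGRR G 2 (BiCay G R L S)"
    and "\<forall>i\<in>{2..m-1}.
           \<not> induced_nbhd_iso (layered_verts G m) (Theta G m R L S T x) (monoid.one G, 0) (monoid.one G, i)
         \<and> \<not> induced_nbhd_iso (layered_verts G m) (Theta G m R L S T x) (monoid.one G, 1) (monoid.one G, i)"
  shows "is_mGRR G m (Theta G m R L S T x)"
proof -
  interpret theta_graph G m R L S T x
    by (rule theta_graph.intro[OF assms(1)], rule theta_graph_axioms.intro) (use assms in auto)
  have "card R = card L" "card L + card S = card T + 1" using assms(8,9) by linarith+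
  then show ?thesis
    using is_mGRR_if_graph_auts_eq[OF finite_carrier _ simple_graph_Theta regular_graph_Theta
        graph_auts_Theta[OF assms(11,12)]] m_ge_3
    by simp
qed

end
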